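(* Let $\underline s\in\mathbb{R}$ and $f,g\in\mathcal{F}_{\underline s}$ with $f\succsim_{\mathrm w}g$. Then $\mathcal{I}^{\mathrm w}_{f,g}=\{I\in\mathcal{K}([0,1]):\ I_f\le I\le I_g,\ \partial I(X)\subseteq[\underline s,f(1)]\}$ is a convex function interval, and $\varphi\in\mathcal{F}_{\underline s}$ satisfies $f\succsim_{\mathrm w}\varphi\succsim_{\mathrm w}g$ if and only if there exists $I\in\mathcal{I}^{\mathrm w}_{f,g}$ with $I=I_\varphi$.
   Context: $X=[0,1]$, $\mathcal{F}_{\underline s}=\{f\in L^1(X): f$ non-decreasing, $f(0)\ge\underline s\}$, $m_f=\int_0^1 f$, $I_\varphi(x)=\int_0^x\varphi(s)\,\mathrm{d}s-m_\varphi$. $f\succsim_{\mathrm w}g$ means $\int_0^x f-m_f\le\int_0^x g-m_g$ for all $x\in X$. $\mathcal{K}([0,1])$ is the set of continuous convex functions, $\partial I(X)=\bigcup_{x\in(0,1)}\partial I(x)$. A convex function interval is a set $\{u\in\mathcal{K}(X):\underline u\le u\le\bar u,\ \partial u(X)\subseteq[\underline s,\bar s]\}$ with $\underline u\le\bar u$ in $\mathcal{K}(X)$ and $\partial\underline u(X),\partial\bar u(X)\subseteq[\underline s,\bar s]$. *)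

theory Defs
  imports "HOL-Analysis.Analysis"
begin

text \<open>X = [0,1]. Functions on X are represented as real \<Rightarrow> real; only values on {0..1} matter.\<close>

definition F_class :: "real \<Rightarrow> (real \<Rightarrow> real) set" where
  "F_class s_lo = {f. f integrable_on {0..1} \<and> mono_on {0..1} f \<and> f 0 \<ge> s_lo}"

definition mean :: "(real \<Rightarrow> real) \<Rightarrow> real" where
  "mean f = integral {0..1} f"

definition Ifun :: "(real \<Rightarrow> real) \<Rightarrow> real \<Rightarrow> real" where
  "Ifun \<phi> x = integral {0..x} \<phi> - mean \<phi>"

definition weak_pref :: "(real \<Rightarrow> real) \<Rightarrow> (real \<Rightarrow> real) \<Rightarrow> bool" where
  "weak_pref f g \<longleftrightarrow> (\<forall>x\<in>{0..1}. integral {0..x} f - mean f \<le> integral {0..x} g - mean g)"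

definition Kconv :: "(real \<Rightarrow> real) set" where
  "Kconv = {u. continuous_on {0..1} u \<and> convex_on {0..1} u}"

definition subdiff :: "(real \<Rightarrow> real) \<Rightarrow> real \<Rightarrow> real set" where
  "subdiff u x = {p. \<forall>y\<in>{0..1}. u y \<ge> u x + p * (y - x)}"

definition subdiff_range :: "(real \<Rightarrow> real) \<Rightarrow> real set" where
  "subdiff_range u = (\<Union>x\<in>{0<..<1}. subdiff u x)"

definition cfi :: "(real \<Rightarrow> real) \<Rightarrow> (real \<Rightarrow> real) \<Rightarrow> real \<Rightarrow> real \<Rightarrow> (real \<Rightarrow> real) set" where
  "cfi lo hi sl sh = {u. u \<in> Kconv \<and> (\<forall>x\<in>{0..1}. lo x \<le> u x \<and> u x \<le> hi x)
                        \<and> subdiff_range u \<subseteq> {sl..sh}}"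

definition is_convex_function_interval :: "(real \<Rightarrow> real) set \<Rightarrow> bool" where
  "is_convex_function_interval C \<longleftrightarrow>
     (\<exists>lo hi sl sh. lo \<in> Kconv \<and> hi \<in> Kconv \<and> (\<forall>x\<in>{0..1}. lo x \<le> hi x)
        \<and> subdiff_range lo \<subseteq> {sl..sh} \<and> subdiff_range hi \<subseteq> {sl..sh}
        \<and> C = cfi lo hi sl sh)"

definition Iw :: "real \<Rightarrow> (real \<Rightarrow> real) \<Rightarrow> (real \<Rightarrow> real) \<Rightarrow> (real \<Rightarrow> real) set" where
  "Iw s_lo f g = {I. I \<in> Kconv \<and> (\<forall>x\<in>{0..1}. Ifun f x \<le> I x \<and> I x \<le> Ifun g x)
                     \<and> subdiff_range I \<subseteq> {s_lo..f 1}}"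

end

theory Submission
  imports Defs
begin

text \<open>
  The increments of \<open>I\<^sub>\<phi>\<close> are integrals of the monotone function \<open>\<phi>\<close>, so \<open>I\<^sub>\<phi>\<close> is convex
  and continuous. A subgradient \<open>p\<close> of \<open>I\<^sub>\<phi>\<close> at an interior point \<open>x\<close> dominates the slope of
  the chord from \<open>0\<close>, which is at least \<open>\<phi>(0) \<ge> s\<close>, and is dominated by the slope of the chord
  to \<open>1\<close>; as \<open>I\<^sub>\<phi>(1) = 0\<close> and \<open>I\<^sub>f \<le> I\<^sub>\<phi>\<close>, the latter is at most the mean of \<open>f\<close> over \<open>[x,1]\<close>,
  hence at most \<open>f(1)\<close>. Everything else is a restatement of \<open>\<succsim>\<^sub>w\<close> as \<open>I\<^sub>f \<le> I\<^sub>\<phi>\<close>.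
\<close>

lemma integral_mono_on_bounds:
  fixes f :: "real \<Rightarrow> real"
  assumes mono: "mono_on {a..b} f" and "a \<le> b"
  shows "(b - a) * f a \<le> integral {a..b} f" and "integral {a..b} f \<le> (b - a) * f b"
proof -
  have int: "f integrable_on {a..b}"
    using mono by (rule integrable_on_mono_on)
  have "integral {a..b} (\<lambda>_. f a) \<le> integral {a..b} f"
    by (rule integral_le) (use int assms in \<open>auto intro!: mono_onD[OF mono]\<close>)
  then show "(b - a) * f a \<le> integral {a..b} f"
    using \<open>a \<le> b\<close> by (simp add: mult.commute)
  have "integral {a..b} f \<le> integral {a..b} (\<lambda>_. f b)"
    by (rule integral_le) (use int assms in \<open>auto intro!: mono_onD[OF mono]\<close>)
  then show "integral {a..b} f \<le> (b - a) * f b"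
    using \<open>a \<le> b\<close> by (simp add: mult.commute)
qed

lemma integral_diff_mono_on:
  fixes f :: "real \<Rightarrow> real"
  assumes "mono_on {a..c} f" and "a \<le> b" and "b \<le> c"
  shows "integral {a..c} f - integral {a..b} f = integral {b..c} f"
  using Henstock_Kurzweil_Integration.integral_combine[OF assms(2,3)
    integrable_on_mono_on[OF assms(1)]] by simp

lemma convex_on_indefinite_integral_mono_on:
  fixes f :: "real \<Rightarrow> real"
  assumes mono: "mono_on {a..b} f"
  shows "convex_on {a..b} (\<lambda>x. integral {a..x} f)"
proof (rule convex_on_linorderI)
  fix t x y :: real
  assume t: "0 < t" "t < 1" and x: "x \<in> {a..b}" and y: "y \<in> {a..b}" and "x < y"
  define z where "z = (1 - t) * x + t * y"
  have "z - x = t * (y - x)" and "y - z = (1 - t) * (y - x)"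
    unfolding z_def by (simp_all add: algebra_simps)
  then have "x \<le> z" and "z \<le> y"
    using t \<open>x < y\<close> by (metis diff_ge_0_iff_ge less_eq_real_def mult_nonneg_nonneg)+
  have mono_sub: "mono_on {c..d} f" if "a \<le> c" "d \<le> b" for c d
    using mono_on_subset[OF mono] that by auto
  let ?F = "\<lambda>x. integral {a..x} f"
  have left: "?F z - ?F x \<le> (z - x) * f z"
    using integral_diff_mono_on[OF mono_sub[of a z], of x] integral_mono_on_bounds(2)[OF mono_sub, of x z]
      x y \<open>x \<le> z\<close> \<open>z \<le> y\<close> by auto
  have right: "(y - z) * f z \<le> ?F y - ?F z"
    using integral_diff_mono_on[OF mono_sub[of a y], of z] integral_mono_on_bounds(1)[OF mono_sub, of z y]
      x y \<open>x \<le> z\<close> \<open>z \<le> y\<close> by auto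
  \<comment> \<open>Both chords are compared with the slope \<open>f z\<close>; the weights make the two slope terms cancel.\<close>
  have "(1 - t) * (?F z - ?F x) + t * (?F z - ?F y) \<le> (1 - t) * ((z - x) * f z) - t * ((y - z) * f z)"
    using mult_left_mono[OF left, of "1 - t"] mult_left_mono[OF right, of t] t
    by (simp add: algebra_simps)
  also have "\<dots> = 0"
    unfolding z_def by (simp add: algebra_simps)
  finally show "?F ((1 - t) *\<^sub>R x + t *\<^sub>R y) \<le> (1 - t) * ?F x + t * ?F y"
    unfolding z_def by (simp add: algebra_simps)
qed (rule convex_real_interval)

lemma Ifun_one [simp]: "Ifun f 1 = 0"
  unfolding Ifun_def mean_def by simp

lemma Ifun_eq_neg_integral:
  assumes "mono_on {0..1} f" and "x \<in> {0..1}"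
  shows "Ifun f x = - integral {x..1} f"
  using integral_diff_mono_on[OF assms(1), of x] assms(2) unfolding Ifun_def mean_def by auto

lemma weak_pref_iff_Ifun_le: "weak_pref f g \<longleftrightarrow> (\<forall>x\<in>{0..1}. Ifun f x \<le> Ifun g x)"
  unfolding weak_pref_def Ifun_def by simp

lemma Ifun_in_Kconv:
  assumes mono: "mono_on {0..1} f"
  shows "Ifun f \<in> Kconv"
proof -
  have "continuous_on {0..1} (Ifun f)"
    unfolding Ifun_def
    by (intro continuous_intros indefinite_integral_continuous_1 integrable_on_mono_on mono)
  moreover have "convex_on {0..1} (Ifun f)"
    using convex_on_add[OF convex_on_indefinite_integral_mono_on[OF mono],
        of "\<lambda>_. - mean f"] convex_on_const[of "{0..1::real}"]
    unfolding Ifun_def by (simp add: convex_real_interval)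
  ultimately show ?thesis
    unfolding Kconv_def by simp
qed

lemma subdiff_Ifun_ge:
  assumes mono: "mono_on {0..1} \<phi>" and p: "p \<in> subdiff (Ifun \<phi>) x" and "0 < x" "x \<le> 1"
  shows "\<phi> 0 \<le> p"
proof -
  have "Ifun \<phi> x + p * (0 - x) \<le> Ifun \<phi> 0"
    using bspec[OF p[unfolded subdiff_def mem_Collect_eq], of 0] by simp
  then have "integral {0..x} \<phi> \<le> x * p"
    unfolding Ifun_def by (simp add: algebra_simps)
  moreover have "x * \<phi> 0 \<le> integral {0..x} \<phi>"
    using integral_mono_on_bounds(1)[OF mono_on_subset[OF mono], of 0 x] assms(3,4) by auto
  ultimately have "x * \<phi> 0 \<le> x * p"
    by linarith
  then show ?thesis
    using \<open>0 < x\<close> by simp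
qed

lemma subdiff_le_of_Ifun_le:
  assumes mono: "mono_on {0..1} f" and p: "p \<in> subdiff u x" and "0 \<le> x" "x < 1"
    and below: "Ifun f x \<le> u x" and "u 1 \<le> 0"
  shows "p \<le> f 1"
proof -
  have "u x + p * (1 - x) \<le> u 1"
    using p unfolding subdiff_def by auto
  then have "(1 - x) * p \<le> - Ifun f x"
    using below \<open>u 1 \<le> 0\<close> by (simp add: algebra_simps)
  also have "\<dots> = integral {x..1} f"
    using Ifun_eq_neg_integral[OF mono] assms(3,4) by simp
  also have "\<dots> \<le> (1 - x) * f 1"
    using integral_mono_on_bounds(2)[OF mono_on_subset[OF mono], of x 1] assms(3,4) by auto
  finally show ?thesis
    using \<open>x < 1\<close> by simp
qed

lemma F_class_mono_on: "f \<in> F_class s \<Longrightarrow> mono_on {0..1} f"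
  and F_class_ge: "f \<in> F_class s \<Longrightarrow> s \<le> f 0"
  unfolding F_class_def by auto

lemma subdiff_range_Ifun_subset:
  assumes \<phi>: "\<phi> \<in> F_class s" and f: "f \<in> F_class s'"
    and le: "\<forall>x\<in>{0..1}. Ifun f x \<le> Ifun \<phi> x"
  shows "subdiff_range (Ifun \<phi>) \<subseteq> {s..f 1}"
proof
  fix p
  assume "p \<in> subdiff_range (Ifun \<phi>)"
  then obtain x where x: "0 < x" "x < 1" and p: "p \<in> subdiff (Ifun \<phi>) x"
    unfolding subdiff_range_def by auto
  have "s \<le> p"
    using F_class_ge[OF \<phi>] subdiff_Ifun_ge[OF F_class_mono_on[OF \<phi>] p] x by simp
  moreover have "p \<le> f 1"
    using subdiff_le_of_Ifun_le[OF F_class_mono_on[OF f] p] le x by simp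
  ultimately show "p \<in> {s..f 1}"
    by simp
qed

lemma Ifun_mem_Iw:
  assumes "\<phi> \<in> F_class s" and "f \<in> F_class s" and "weak_pref f \<phi>" and "weak_pref \<phi> g"
  shows "Ifun \<phi> \<in> Iw s f g"
  using assms Ifun_in_Kconv[OF F_class_mono_on] subdiff_range_Ifun_subset
  unfolding Iw_def weak_pref_iff_Ifun_le by auto

theorem lemma4:
  fixes s_lo :: real and f g :: "real \<Rightarrow> real"
  assumes "f \<in> F_class s_lo" and "g \<in> F_class s_lo" and "weak_pref f g"
  shows "is_convex_function_interval (Iw s_lo f g)
    \<and> (\<forall>\<phi>\<in>F_class s_lo. (weak_pref f \<phi> \<and> weak_pref \<phi> g) \<longleftrightarrow>
          (\<exists>I\<in>Iw s_lo f g. \<forall>x\<in>{0..1}. I x = Ifun \<phi> x))"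
proof -
  have "Ifun f \<in> Iw s_lo f g" and "Ifun g \<in> Iw s_lo f g"
    using Ifun_mem_Iw assms weak_pref_iff_Ifun_le by blast+
  moreover have "Iw s_lo f g = cfi (Ifun f) (Ifun g) s_lo (f 1)"
    unfolding Iw_def cfi_def by simp
  ultimately have "is_convex_function_interval (Iw s_lo f g)"
    unfolding is_convex_function_interval_def Iw_def by blast
  moreover have "(weak_pref f \<phi> \<and> weak_pref \<phi> g) \<longleftrightarrow> (\<exists>I\<in>Iw s_lo f g. \<forall>x\<in>{0..1}. I x = Ifun \<phi> x)"
    if "\<phi> \<in> F_class s_lo" for \<phi>
  proof
    assume "weak_pref f \<phi> \<and> weak_pref \<phi> g"
    then show "\<exists>I\<in>Iw s_lo f g. \<forall>x\<in>{0..1}. I x = Ifun \<phi> x"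
      using Ifun_mem_Iw that assms(1) by blast
  next
    assume "\<exists>I\<in>Iw s_lo f g. \<forall>x\<in>{0..1}. I x = Ifun \<phi> x"
    then show "weak_pref f \<phi> \<and> weak_pref \<phi> g"
      unfolding Iw_def weak_pref_iff_Ifun_le by auto
  qed
  ultimately show ?thesis
    by blast
qed

end
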